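(* Fix $r,\nu,\mu\in\mathbb R$, $\eta>0$, $\sigma>0$, $s_0>0$, $\lambda>0$, $\gamma>0$, and for $T>0$ let $$\rho^*(T)=\frac{\eta T}{W\left(\lambda\gamma s_0\eta^2Te^{(\nu-\frac{\eta^2}{2})T}\right)}\frac{\mu-r}{\sigma},$$ where $W$ is the Lambert function. Then $$\rho^*(T)=\frac{\mu-r}{\sigma}\left(\frac1{\eta s_0\lambda\gamma}+\left(\eta-\frac{\nu-\frac{\eta^2}{2}}{\eta s_0\lambda\gamma}\right)T\right)+T\epsilon(T),\quad\text{with }\lim_{T\to0^+}\epsilon(T)=0.$$ Moreover, if $\nu>\frac{\eta^2}{2}$, then $$\lim_{T\to+\infty}\rho^*(T)=\frac{\mu-r}{\sigma}\frac{\eta}{\nu-\frac{\eta^2}{2}}.$$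
   Context: The Lambert function $W$ is the inverse of the bijection $x\in(-1,+\infty)\mapsto xe^x\in(-1/e,+\infty)$. *)

theory Defs
  imports "HOL-Analysis.Analysis"
begin

text \<open>Lambert function: inverse of the bijection x \<in> (-1,+\<infinity>) \<mapsto> x e^x \<in> (-1/e,+\<infinity>).
  Outside (-1/e,+\<infinity>) the value is unspecified.\<close>
definition lambertW :: "real \<Rightarrow> real" where
  "lambertW y = (THE x. x > -1 \<and> x * exp x = y)"

definition rho_star ::
  "real \<Rightarrow> real \<Rightarrow> real \<Rightarrow> real \<Rightarrow> real \<Rightarrow> real \<Rightarrow> real \<Rightarrow> real \<Rightarrow> real \<Rightarrow> real" where
  "rho_star r \<nu> \<mu> \<eta> \<sigma> s0 lam \<gamma> T =
     (\<eta> * T / lambertW (lam * \<gamma> * s0 * \<eta>^2 * T * exp ((\<nu> - \<eta>^2/2) * T))) * ((\<mu> - r) / \<sigma>)"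

end

(*
  With a = lam \<gamma> s0 \<eta>^2 and b = \<nu> - \<eta>^2/2, the identity W(y) e^W(y) = y turns
  T / W(a T e^(bT)) into exp (W(a T e^(bT)) - bT) / a. This expression is differentiable at
  T = 0, because W is (inverse function theorem, W(0) = 0, W'(0) = 1); its value 1/a and
  derivative (a - b)/a at 0 give the first-order expansion. At infinity,
  ln y - ln ln y \<le> W(y) \<le> ln y shows W(y) ~ ln y, hence W(a T e^(bT)) ~ bT when b > 0.
*)
theory Submission
  imports Defs "HOL-Real_Asymp.Real_Asymp"
begin

lemma strict_mono_on_xexp: "strict_mono_on {-1..} (\<lambda>x::real. x * exp x)"
proof (rule strict_mono_onI)
  fix s t :: real
  assume "s \<in> {-1..}" "t \<in> {-1..}" "s < t"
  show "s * exp s < t * exp t"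
  proof (rule DERIV_pos_imp_increasing_open[OF \<open>s < t\<close>])
    fix x :: real
    assume "s < x" "x < t"
    then have "0 < (1 + x) * exp x"
      using \<open>s \<in> {-1..}\<close> by simp
    moreover have "DERIV (\<lambda>x. x * exp x) x :> (1 + x) * exp x"
      by (auto intro!: derivative_eq_intros simp: algebra_simps)
    ultimately show "\<exists>y. DERIV (\<lambda>x. x * exp x) x :> y \<and> 0 < y"
      by blast
  qed (intro continuous_intros)
qed

lemma lambertW_xexp:
  assumes "-1 < x"
  shows "lambertW (x * exp x) = x"
  unfolding lambertW_def
proof (rule the_equality)
  fix y
  assume "-1 < y \<and> y * exp y = x * exp x"
  then show "y = x"
    using strict_mono_on_eqD[OF strict_mono_on_xexp, of x y] assms by simp
qed (use assms in simp)

lemma xexp_surj: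
  fixes y :: real
  assumes "- exp (-1) < y"
  obtains x where "-1 < x" "x * exp x = y"
proof -
  define m where "m = max 0 y"
  have "y \<le> m * 1"
    by (simp add: m_def)
  also have "\<dots> \<le> m * exp m"
    by (intro mult_left_mono) (auto simp: m_def)
  finally obtain x where x: "-1 \<le> x" "x * exp x = y"
    using IVT'[of "\<lambda>x. x * exp x" "-1" y m] assms
    by (force simp: m_def intro: continuous_intros)
  moreover have "x \<noteq> -1"
    using x assms by auto
  ultimately show thesis
    by (intro that[of x]) auto
qed

lemma lambertW_gt_minus_one: "- exp (-1) < y \<Longrightarrow> -1 < lambertW y"
  by (metis lambertW_xexp xexp_surj)

lemma lambertW_times_exp: "- exp (-1) < y \<Longrightarrow> lambertW y * exp (lambertW y) = y"
  by (metis lambertW_xexp xexp_surj)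

lemma lambertW_zero [simp]: "lambertW 0 = 0"
  using lambertW_xexp[of 0] by simp

lemma lambertW_le_iff:
  assumes "- exp (-1) < x" "- exp (-1) < y"
  shows "lambertW x \<le> lambertW y \<longleftrightarrow> x \<le> y"
proof -
  have "lambertW x \<in> {-1..}" "lambertW y \<in> {-1..}"
    using lambertW_gt_minus_one assms by (auto simp: less_imp_le)
  from strict_mono_on_less_eq[OF strict_mono_on_xexp this]
  show ?thesis
    by (simp add: lambertW_times_exp assms)
qed

lemma lambertW_pos: "0 < y \<Longrightarrow> 0 < lambertW y"
  using lambertW_le_iff[of y 0] by (simp add: less_le_not_le)

lemma lambertW_has_real_derivative:
  assumes "- exp (-1) < y"
  shows "(lambertW has_real_derivative inverse ((1 + lambertW y) * exp (lambertW y))) (at y)"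
proof (rule DERIV_inverse_function[where f = "\<lambda>x. x * exp x" and a = "- exp (-1)" and b = "y + 1"])
  show "DERIV (\<lambda>x. x * exp x) (lambertW y) :> (1 + lambertW y) * exp (lambertW y)"
    by (auto intro!: derivative_eq_intros simp: algebra_simps)
  show "(1 + lambertW y) * exp (lambertW y) \<noteq> 0"
    using lambertW_gt_minus_one[OF assms] by simp
  show "isCont lambertW y"
  proof -
    define d where "d = (1 + lambertW y) / 2"
    have "0 < d"
      using lambertW_gt_minus_one[OF assms] by (simp add: d_def)
    have "isCont lambertW (lambertW y * exp (lambertW y))"
    proof (rule isCont_inverse_function
        [where f = "\<lambda>x. x * exp x" and x = "lambertW y", OF \<open>0 < d\<close>])
      fix z
      assume "\<bar>z - lambertW y\<bar> \<le> d"
      then have "-1 < z"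
        using abs_le_D2 lambertW_gt_minus_one[OF assms] unfolding d_def by fastforce
      then show "lambertW (z * exp z) = z"
        by (rule lambertW_xexp)
    qed (intro continuous_intros)
    then show ?thesis
      using lambertW_times_exp[OF assms] by simp
  qed
qed (use assms lambertW_times_exp in auto)

lemma ln_lambertW: "0 < y \<Longrightarrow> ln (lambertW y) + lambertW y = ln y"
  using lambertW_times_exp[of y] lambertW_pos[of y]
  by (smt (verit) exp_gt_zero ln_exp ln_mult)

lemma lambertW_ln_bounds:
  assumes "exp 1 \<le> y"
  shows "ln y - ln (ln y) \<le> lambertW y" and "lambertW y \<le> ln y"
proof -
  have "0 < y"
    using assms exp_gt_zero[of 1] by linarith
  have "1 \<le> lambertW y"
    using lambertW_le_iff[of "exp 1" y] lambertW_xexp[of 1] assms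
    by (smt (verit) exp_gt_zero)
  then show "lambertW y \<le> ln y"
    using ln_lambertW[OF \<open>0 < y\<close>] ln_ge_zero[of "lambertW y"] by linarith
  then have "ln (lambertW y) \<le> ln (ln y)"
    using \<open>1 \<le> lambertW y\<close> by simp
  then show "ln y - ln (ln y) \<le> lambertW y"
    using ln_lambertW[OF \<open>0 < y\<close>] by linarith
qed

lemma lambertW_over_ln_tendsto_at_top: "((\<lambda>y. lambertW y / ln y) \<longlongrightarrow> 1) at_top"
proof (rule tendsto_sandwich)
  have ln_pos: "0 < ln y" if "exp 1 \<le> y" for y :: real
    using that by (smt (verit) exp_gt_zero ln_ge_iff)
  show "\<forall>\<^sub>F y in at_top. (ln y - ln (ln y)) / ln y \<le> lambertW y / ln y"
    using eventually_ge_at_top[of "exp 1 :: real"]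
    by (rule eventually_mono) (auto intro!: divide_right_mono lambertW_ln_bounds less_imp_le[OF ln_pos])
  show "\<forall>\<^sub>F y in at_top. lambertW y / ln y \<le> 1"
    using eventually_ge_at_top[of "exp 1 :: real"]
    by (rule eventually_mono) (simp add: divide_le_eq_1 ln_pos lambertW_ln_bounds)
  show "((\<lambda>y::real. (ln y - ln (ln y)) / ln y) \<longlongrightarrow> 1) at_top"
    by real_asymp
qed (rule tendsto_const)

lemma lambertW_quotient_expansion_at_right_0:
  fixes a b :: real
  assumes "0 < a"
  shows "((\<lambda>T. (T / lambertW (a * T * exp (b * T)) - 1 / a - (a - b) / a * T) / T)
           \<longlongrightarrow> 0) (at_right 0)"
proof -
  define F where "F T = exp (lambertW (a * T * exp (b * T)) - b * T) / a" for T
  have "(lambertW has_real_derivative 1) (at 0)"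
    using lambertW_has_real_derivative[of 0] by simp
  then have "(F has_real_derivative (a - b) / a) (at 0)"
    unfolding F_def using \<open>0 < a\<close>
    by (auto intro!: derivative_eq_intros DERIV_chain2[where f = lambertW])
  then have "((\<lambda>T. (F T - F 0) / (T - 0)) \<longlongrightarrow> (a - b) / a) (at_right 0)"
    unfolding has_field_derivative_iff by (rule tendsto_mono[OF at_le, rotated]) simp
  from LIM_zero[OF this]
  have lim: "((\<lambda>T. (F T - 1 / a) / T - (a - b) / a) \<longlongrightarrow> 0) (at_right 0)"
    by (simp add: F_def)
  have F_eq: "F T = T / lambertW (a * T * exp (b * T))" if "0 < T" for T
  proof -
    define w where "w = lambertW (a * T * exp (b * T))"
    have "0 < w" "w * exp w = a * T * exp (b * T)"
      using lambertW_pos lambertW_times_exp \<open>0 < a\<close> \<open>0 < T\<close> unfolding w_def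
      by (smt (verit) exp_gt_zero mult_pos_pos)+
    then show ?thesis
      unfolding F_def w_def[symmetric] using \<open>0 < a\<close> by (simp add: exp_diff field_simps)
  qed
  have "(F T - 1 / a) / T - (a - b) / a
      = (T / lambertW (a * T * exp (b * T)) - 1 / a - (a - b) / a * T) / T" if "0 < T" for T
    using F_eq[OF that] that by (simp add: field_simps)
  then have "\<forall>\<^sub>F T in at_right 0. (F T - 1 / a) / T - (a - b) / a
      = (T / lambertW (a * T * exp (b * T)) - 1 / a - (a - b) / a * T) / T"
    using eventually_at_right_less[of 0] by (auto elim!: eventually_mono)
  then show ?thesis
    by (rule Lim_transform_eventually[OF lim])
qed

lemma lambertW_quotient_tendsto_at_top:
  fixes a b :: real
  assumes "0 < a" "0 < b"
  shows "((\<lambda>T. T / lambertW (a * T * exp (b * T))) \<longlongrightarrow> 1 / b) at_top"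
proof -
  define X where "X T = a * T * exp (b * T)" for T
  have "filterlim X at_top at_top"
    unfolding X_def using assms by real_asymp
  with lambertW_over_ln_tendsto_at_top
  have "((\<lambda>T. lambertW (X T) / ln (X T)) \<longlongrightarrow> 1) at_top"
    by (rule filterlim_compose)
  moreover have "((\<lambda>T. T / ln (X T)) \<longlongrightarrow> inverse b) at_top"
    unfolding X_def using assms by real_asymp
  ultimately have
    "((\<lambda>T. (T / ln (X T)) / (lambertW (X T) / ln (X T))) \<longlongrightarrow> inverse b / 1) at_top"
    by (intro tendsto_divide) auto
  then have lim: "((\<lambda>T. (T / ln (X T)) / (lambertW (X T) / ln (X T))) \<longlongrightarrow> 1 / b) at_top"
    by (simp add: inverse_eq_divide)
  have "\<forall>\<^sub>F T in at_top. 2 \<le> X T"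
    using \<open>filterlim X at_top at_top\<close> by (simp add: filterlim_at_top)
  then have "\<forall>\<^sub>F T in at_top. (T / ln (X T)) / (lambertW (X T) / ln (X T)) = T / lambertW (X T)"
    by (rule eventually_mono) simp
  from Lim_transform_eventually[OF lim this] show ?thesis
    unfolding X_def .
qed

theorem lemma3:
  fixes r \<nu> \<mu> \<eta> \<sigma> s0 lam \<gamma> :: real
  assumes "\<eta> > 0" "\<sigma> > 0" "s0 > 0" "lam > 0" "\<gamma> > 0"
  shows "(\<exists>\<epsilon> :: real \<Rightarrow> real.
            (\<forall>T>0. rho_star r \<nu> \<mu> \<eta> \<sigma> s0 lam \<gamma> T =
               (\<mu> - r) / \<sigma> * (1 / (\<eta> * s0 * lam * \<gamma>)
                  + (\<eta> - (\<nu> - \<eta>^2/2) / (\<eta> * s0 * lam * \<gamma>)) * T)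
               + T * \<epsilon> T)
          \<and> (\<epsilon> \<longlongrightarrow> 0) (at_right 0))
       \<and> (\<nu> > \<eta>^2/2 \<longrightarrow>
          ((\<lambda>T. rho_star r \<nu> \<mu> \<eta> \<sigma> s0 lam \<gamma> T) \<longlongrightarrow>
             (\<mu> - r) / \<sigma> * (\<eta> / (\<nu> - \<eta>^2/2))) at_top)"
proof -
  define a where "a = lam * \<gamma> * s0 * \<eta>^2"
  define b where "b = \<nu> - \<eta>^2/2"
  define c where "c = (\<mu> - r) / \<sigma>"
  define q where "q T = T / lambertW (a * T * exp (b * T))" for T
  define \<epsilon> where "\<epsilon> T = c * \<eta> * ((q T - 1 / a - (a - b) / a * T) / T)" for T
  have "0 < a"
    using assms by (simp add: a_def)
  have rho: "rho_star r \<nu> \<mu> \<eta> \<sigma> s0 lam \<gamma> T = c * \<eta> * q T" for T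
    unfolding rho_star_def q_def a_def b_def c_def by (simp add: mult_ac)
  have "(\<mu> - r) / \<sigma> * (1 / (\<eta> * s0 * lam * \<gamma>) + (\<eta> - (\<nu> - \<eta>^2/2) / (\<eta> * s0 * lam * \<gamma>)) * T)
      = c * \<eta> * (1 / a + (a - b) / a * T)" for T
    unfolding a_def b_def c_def using assms by (simp add: field_simps power2_eq_square)
  then have "\<forall>T>0. rho_star r \<nu> \<mu> \<eta> \<sigma> s0 lam \<gamma> T =
      (\<mu> - r) / \<sigma> * (1 / (\<eta> * s0 * lam * \<gamma>) + (\<eta> - (\<nu> - \<eta>^2/2) / (\<eta> * s0 * lam * \<gamma>)) * T)
      + T * \<epsilon> T"
    by (simp add: rho \<epsilon>_def field_simps)
  moreover have "(\<epsilon> \<longlongrightarrow> 0) (at_right 0)"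
    unfolding \<epsilon>_def q_def
    by (rule tendsto_mult_right_zero[OF lambertW_quotient_expansion_at_right_0[OF \<open>0 < a\<close>]])
  moreover have "((\<lambda>T. rho_star r \<nu> \<mu> \<eta> \<sigma> s0 lam \<gamma> T) \<longlongrightarrow> c * (\<eta> / b)) at_top" if "0 < b"
    using tendsto_mult_left[OF lambertW_quotient_tendsto_at_top[OF \<open>0 < a\<close> that], of "c * \<eta>"]
    by (simp add: rho q_def)
  ultimately show ?thesis
    unfolding b_def c_def by auto
qed

end
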